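(* Let $X$ be a Banach space, $T$ an arbitrary nonempty index set, and $f_t:X\to\mathbb{R}\cup\{+\infty\}$ $(t\in T)$ convex functions. Then the (upper) infinite sum function $\overline{\sum_{t\in T}} f_t : X\to[-\infty,+\infty]$ is convex.
   Context: Let $\mathcal{F}(T)$ denote the family of all finite subsets of $T$, directed by inclusion. For a net $\{\alpha_S\}_{S\in\mathcal{F}(T)}\subset[-\infty,+\infty]$, $\limsup_{S\uparrow T,|S|<\infty}\alpha_S:=\inf_{S_0\in\mathcal{F}(T)}\sup_{S\in\mathcal{F}(T),\,S_0\subset S}\alpha_S$. The infinite (upper) sum is defined by $\big(\overline{\sum_{t\in T}} f_t\big)(x):=\limsup_{S\uparrow T,|S|<\infty}\sum_{t\in S} f_t(x)$ for $x\in X$. A function with values in $[-\infty,+\infty]$ is convex if its epigraph $\{(x,\mu)\in X\times\mathbb{R}: f(x)\le\mu\}$ is convex. *)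

theory Defs
  imports "HOL-Analysis.Analysis" "HOL-Library.Extended_Real"
begin

definition ereal_convex :: "('a::real_vector \<Rightarrow> ereal) \<Rightarrow> bool" where
  "ereal_convex f \<longleftrightarrow> convex {(x, \<mu>::real). f x \<le> ereal \<mu>}"

text \<open>Upper infinite sum: limsup over the net of finite subsets of T directed by inclusion.\<close>
definition upper_infsum :: "('b \<Rightarrow> 'a \<Rightarrow> ereal) \<Rightarrow> 'b set \<Rightarrow> 'a \<Rightarrow> ereal" where
  "upper_infsum f T x =
     (INF S0\<in>{S. finite S \<and> S \<subseteq> T}.
        SUP S\<in>{S. finite S \<and> S0 \<subseteq> S \<and> S \<subseteq> T}. \<Sum>t\<in>S. f t x)"

end

theory Submission
  imports Defs
begin

text \<open>For every finite \<open>S0 \<subseteq> T\<close>, the tail supremum of the partial sums over finite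
  \<open>S \<supseteq> S0\<close> is a pointwise supremum of convex functions, hence convex. These tail suprema
  decrease as \<open>S0\<close> grows and any two of them lie above a third (take the union of the index
  sets), and the infimum of such a downward directed family of convex functions is convex.
  Excluding the value \<open>-\<infinity>\<close> keeps finite sums of convex functions convex.\<close>

lemma ereal_convexI:
  fixes g :: "'a::real_vector \<Rightarrow> ereal"
  assumes "\<And>x y a b u. g x \<le> ereal a \<Longrightarrow> g y \<le> ereal b \<Longrightarrow> 0 \<le> u \<Longrightarrow> u \<le> 1 \<Longrightarrow>
    g (u *\<^sub>R x + (1 - u) *\<^sub>R y) \<le> ereal (u * a + (1 - u) * b)"
  shows "ereal_convex g"
  unfolding ereal_convex_def
proof (rule convexI, clarsimp)
  fix x y :: 'a and a b u w :: real
  assume "g x \<le> ereal a" "g y \<le> ereal b" "0 \<le> u" "0 \<le> w" "u + w = 1"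
  moreover have "w = 1 - u"
    using \<open>u + w = 1\<close> by simp
  ultimately show "g (u *\<^sub>R x + w *\<^sub>R y) \<le> ereal (u * a + w * b)"
    using assms[of x a y b u] by simp
qed

lemma ereal_convexD:
  fixes g :: "'a::real_vector \<Rightarrow> ereal"
  assumes "ereal_convex g" "g x \<le> ereal a" "g y \<le> ereal b" "0 \<le> u" "u \<le> 1"
  shows "g (u *\<^sub>R x + (1 - u) *\<^sub>R y) \<le> ereal (u * a + (1 - u) * b)"
proof -
  have "u *\<^sub>R (x, a) + (1 - u) *\<^sub>R (y, b) \<in> {(x, \<mu>::real). g x \<le> ereal \<mu>}"
    using assms unfolding ereal_convex_def by (intro convexD) auto
  then show ?thesis by simp
qed

lemma ereal_convex_const_zero: "ereal_convex (\<lambda>x::'a::real_vector. 0)"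
  by (rule ereal_convexI) simp

lemma ereal_convex_add:
  fixes f g :: "'a::real_vector \<Rightarrow> ereal"
  assumes f: "ereal_convex f" "\<And>x. f x \<noteq> -\<infinity>"
    and g: "ereal_convex g" "\<And>x. g x \<noteq> -\<infinity>"
  shows "ereal_convex (\<lambda>x. f x + g x)"
proof (rule ereal_convexI)
  fix x y :: 'a and a b u :: real
  assume x: "f x + g x \<le> ereal a" and y: "f y + g y \<le> ereal b" and u: "0 \<le> u" "u \<le> 1"
  obtain fx gx where fgx: "f x = ereal fx" "g x = ereal gx"
    using x f(2)[of x] g(2)[of x] by (cases "f x"; cases "g x") auto
  obtain fy gy where fgy: "f y = ereal fy" "g y = ereal gy"
    using y f(2)[of y] g(2)[of y] by (cases "f y"; cases "g y") auto
  let ?z = "u *\<^sub>R x + (1 - u) *\<^sub>R y"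
  have "f ?z + g ?z \<le> ereal (u * fx + (1 - u) * fy) + ereal (u * gx + (1 - u) * gy)"
    using ereal_convexD[OF f(1), of x fx y fy u] ereal_convexD[OF g(1), of x gx y gy u] fgx fgy u
    by (intro add_mono) auto
  also have "\<dots> = ereal (u * (fx + gx) + (1 - u) * (fy + gy))"
    by (simp add: algebra_simps)
  also have "\<dots> \<le> ereal (u * a + (1 - u) * b)"
    using x y fgx fgy u by (simp add: add_mono mult_left_mono)
  finally show "f ?z + g ?z \<le> ereal (u * a + (1 - u) * b)" .
qed

lemma ereal_convex_sum:
  fixes f :: "'b \<Rightarrow> 'a::real_vector \<Rightarrow> ereal"
  assumes "finite S"
    and "\<And>t x. t \<in> S \<Longrightarrow> f t x \<noteq> -\<infinity>"
    and "\<And>t. t \<in> S \<Longrightarrow> ereal_convex (f t)"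
  shows "ereal_convex (\<lambda>x. \<Sum>t\<in>S. f t x)"
  using assms
proof (induction S rule: finite_induct)
  case empty
  show ?case by (simp add: ereal_convex_const_zero)
next
  case (insert t S)
  have "(\<Sum>s\<in>S. f s x) \<noteq> -\<infinity>" for x
    using insert.hyps(1) insert.prems(1) by (induction S rule: finite_induct) auto
  then show ?case
    using insert by (simp add: ereal_convex_add)
qed

lemma ereal_convex_SUP:
  fixes g :: "'i \<Rightarrow> 'a::real_vector \<Rightarrow> ereal"
  assumes "\<And>i. i \<in> I \<Longrightarrow> ereal_convex (g i)"
  shows "ereal_convex (\<lambda>x. SUP i\<in>I. g i x)"
proof -
  have "{(x, \<mu>::real). (SUP i\<in>I. g i x) \<le> ereal \<mu>} = (\<Inter>i\<in>I. {(x, \<mu>). g i x \<le> ereal \<mu>})"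
    by (auto simp: SUP_le_iff)
  then show ?thesis
    using assms unfolding ereal_convex_def by (simp add: convex_INT)
qed

lemma ereal_convex_INF_directed:
  fixes g :: "'i \<Rightarrow> 'a::real_vector \<Rightarrow> ereal"
  assumes convex: "\<And>i. i \<in> I \<Longrightarrow> ereal_convex (g i)"
    and directed: "\<And>i j. i \<in> I \<Longrightarrow> j \<in> I \<Longrightarrow> \<exists>k\<in>I. \<forall>x. g k x \<le> g i x \<and> g k x \<le> g j x"
  shows "ereal_convex (\<lambda>x. INF i\<in>I. g i x)"
proof (rule ereal_convexI)
  fix x y :: 'a and a b u :: real
  assume x: "(INF i\<in>I. g i x) \<le> ereal a" and y: "(INF i\<in>I. g i y) \<le> ereal b"
    and u: "0 \<le> u" "u \<le> 1"
  let ?z = "u *\<^sub>R x + (1 - u) *\<^sub>R y"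
  show "(INF i\<in>I. g i ?z) \<le> ereal (u * a + (1 - u) * b)"
  proof (rule ereal_le_epsilon2)
    fix e :: real
    assume "0 < e"
    then have "(INF i\<in>I. g i x) < ereal (a + e)" "(INF i\<in>I. g i y) < ereal (b + e)"
      using x y by (auto intro: order.strict_trans1)
    then obtain i j where "i \<in> I" "g i x < ereal (a + e)" "j \<in> I" "g j y < ereal (b + e)"
      by (auto simp: INF_less_iff)
    moreover obtain k where "k \<in> I" "\<forall>x. g k x \<le> g i x \<and> g k x \<le> g j x"
      using directed[OF \<open>i \<in> I\<close> \<open>j \<in> I\<close>] by blast
    ultimately have k: "k \<in> I" "g k x \<le> ereal (a + e)" "g k y \<le> ereal (b + e)"
      by (meson less_imp_le order.trans)+
    have "(INF i\<in>I. g i ?z) \<le> g k ?z"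
      using k(1) by (rule INF_lower)
    also have "\<dots> \<le> ereal (u * (a + e) + (1 - u) * (b + e))"
      using ereal_convexD[OF convex[OF k(1)] k(2,3) u] .
    also have "\<dots> = ereal (u * a + (1 - u) * b) + ereal e"
      by (simp add: algebra_simps)
    finally show "(INF i\<in>I. g i ?z) \<le> ereal (u * a + (1 - u) * b) + ereal e" .
  qed
qed

theorem proposition2p1:
  fixes f :: "'b \<Rightarrow> 'a::banach \<Rightarrow> ereal" and T :: "'b set"
  assumes "T \<noteq> {}"
    and "\<And>t x. t \<in> T \<Longrightarrow> f t x \<noteq> -\<infinity>"
    and "\<And>t. t \<in> T \<Longrightarrow> ereal_convex (f t)"
  shows "ereal_convex (upper_infsum f T)"
proof -
  define tail_sup where "tail_sup S0 x = (SUP S\<in>{S. finite S \<and> S0 \<subseteq> S \<and> S \<subseteq> T}. \<Sum>t\<in>S. f t x)"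
    for S0 x
  have upper_infsum_eq: "upper_infsum f T = (\<lambda>x. INF S0\<in>{S. finite S \<and> S \<subseteq> T}. tail_sup S0 x)"
    unfolding upper_infsum_def tail_sup_def ..
  have convex: "ereal_convex (tail_sup S0)" for S0
    unfolding tail_sup_def using assms(2,3)
    by (intro ereal_convex_SUP ereal_convex_sum) auto
  have directed: "\<exists>S2\<in>{S. finite S \<and> S \<subseteq> T}.
      \<forall>x. tail_sup S2 x \<le> tail_sup S0 x \<and> tail_sup S2 x \<le> tail_sup S1 x"
    if "S0 \<in> {S. finite S \<and> S \<subseteq> T}" "S1 \<in> {S. finite S \<and> S \<subseteq> T}" for S0 S1
    using that unfolding tail_sup_def
    by (intro bexI[of _ "S0 \<union> S1"]) (auto intro!: SUP_subset_mono)
  show ?thesis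
    unfolding upper_infsum_eq by (intro ereal_convex_INF_directed convex directed)
qed

end
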